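(* Consider the fading cognitive multiple-access channel with $K$ secondary users and $M$ primary receivers described in the context, with positive constants $P^{\rm LT}_1,\ldots,P^{\rm LT}_K>0$ and $\Gamma^{\rm LT}_1,\ldots,\Gamma^{\rm LT}_M>0$. Consider the problem $$\max_{\{p_k(\boldsymbol{\alpha})\}}\ \mathbb{E}\Big[\log\Big(1+\sum_{k=1}^K h_k p_k(\boldsymbol{\alpha})\Big)\Big]$$ over power-control policies $p_k(\boldsymbol{\alpha})\ge 0$, subject to $\mathbb{E}[p_k(\boldsymbol{\alpha})]\le P^{\rm LT}_k$ for all $k$ and $\mathbb{E}\big[\sum_{k=1}^K g_{km}p_k(\boldsymbol{\alpha})\big]\le \Gamma^{\rm LT}_m$ for all $m$. Then dynamic TDMA is optimal: there is an optimal policy for this problem such that for almost every channel realization $\boldsymbol{\alpha}$ at most one index $k$ has $p_k(\boldsymbol{\alpha})>0$. Moreover, letting $\lambda_1^*,\ldots,\lambda_K^*\ge 0$, $\mu_1^*,\ldots,\mu_M^*\ge 0$ be optimal solutions of the Lagrange dual problem, this optimal policy can be taken such that, at almost every $\boldsymbol{\alpha}$, if user $i$ is the user with $p_i(\boldsymbol{\alpha})>0$ then $$\frac{h_i}{\lambda_i^*+\sum_{m=1}^M\mu_m^* g_{im}}\ \ge\ \frac{h_j}{\lambda_j^*+\sum_{m=1}^M\mu_m^* g_{jm}}\quad\forall j\neq i,\qquad p_i(\boldsymbol{\alpha})=\Big(\frac{1}{\lambda_i^*+\sum_{m=1}^M\mu_m^* g_{im}}-\frac{1}{h_i}\Big)^+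 .$$
   Context: Setting: $K$ secondary users transmit to a secondary base station while $M$ primary receivers are present. The channel state is the random vector $\boldsymbol{\alpha}=(h_1,\ldots,h_K,g_{11},\ldots,g_{1M},\ldots,g_{K1},\ldots,g_{KM})$ of nonnegative channel power gains, where $h_k$ is the gain from user $k$ to the base station and $g_{km}$ the gain from user $k$ to primary receiver $m$. $\boldsymbol{\alpha}$ has a continuous, differentiable joint cumulative distribution function, and the $h_k$'s and $g_{km}$'s are independent. A power-control policy assigns to every realization $\boldsymbol{\alpha}$ powers $p_k(\boldsymbol{\alpha})\ge 0$; expectations are over $\boldsymbol{\alpha}$; $\log$ is natural; $(x)^+=\max(0,x)$. The Lagrange dual problem is: minimize over $\lambda_k\ge0,\mu_m\ge0$ the dual function $g(\{\lambda_k\},\{\mu_m\})=\sup_{p_k(\cdot)\ge 0}\Big\{\mathbb{E}[\log(1+\sum_k h_kp_k(\boldsymbol{\alpha}))]-\sum_k\lambda_k(\mathbb{E}[p_k(\boldsymbol{\alpha})]-P_k^{\rm LT})-\sum_m\mu_m(\mathbb{E}[\sum_k g_{km}p_k(\boldsymbol{\alpha})]-\Gamma_m^{\rm LT})\Big\}$. *)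

theory Defs
  imports "HOL-Probability.Probability"
begin

text \<open>Channel state alpha = (h, g): h $ k is the gain user k -> base station,
  g $ (k,m) the gain user k -> primary receiver m. Users are the elements of the
  finite type 'k (K = CARD('k)), primary receivers the elements of 'm (M = CARD('m)).\<close>

type_synonym ('k, 'm) chstate = "(real ^ 'k) \<times> (real ^ ('k \<times> 'm))"

definition hh :: "('k::finite, 'm::finite) chstate \<Rightarrow> 'k \<Rightarrow> real" where
  "hh \<alpha> k = fst \<alpha> $ k"

definition gg :: "('k::finite, 'm::finite) chstate \<Rightarrow> 'k \<Rightarrow> 'm \<Rightarrow> real" where
  "gg \<alpha> k m = snd \<alpha> $ (k, m)"

definition joint_cdf :: "('a::euclidean_space) measure \<Rightarrow> 'a \<Rightarrow> real" where
  "joint_cdf D x = measure D {y. \<forall>i\<in>Basis. y \<bullet> i \<le> x \<bullet> i}"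

definition gain_coord :: "'k + ('k \<times> 'm) \<Rightarrow> ('k::finite, 'm::finite) chstate \<Rightarrow> real" where
  "gain_coord i \<alpha> = (case i of Inl k \<Rightarrow> hh \<alpha> k | Inr (k, m) \<Rightarrow> gg \<alpha> k m)"

definition policy :: "('k::finite, 'm::finite) chstate measure \<Rightarrow> ('k \<Rightarrow> ('k, 'm) chstate \<Rightarrow> real) \<Rightarrow> bool" where
  "policy D p \<longleftrightarrow> (\<forall>k. p k \<in> borel_measurable D \<and> (\<forall>\<alpha>. 0 \<le> p k \<alpha>))"

definition rate :: "('k::finite, 'm::finite) chstate measure \<Rightarrow> ('k \<Rightarrow> ('k, 'm) chstate \<Rightarrow> real) \<Rightarrow> ennreal" where
  "rate D p = (\<integral>\<^sup>+ \<alpha>. ennreal (ln (1 + (\<Sum>k\<in>UNIV. hh \<alpha> k * p k \<alpha>))) \<partial>D)"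

definition feasible :: "('k::finite, 'm::finite) chstate measure \<Rightarrow> ('k \<Rightarrow> real) \<Rightarrow> ('m \<Rightarrow> real)
    \<Rightarrow> ('k \<Rightarrow> ('k, 'm) chstate \<Rightarrow> real) \<Rightarrow> bool" where
  "feasible D PLT GLT p \<longleftrightarrow> policy D p
     \<and> (\<forall>k. (\<integral>\<^sup>+ \<alpha>. ennreal (p k \<alpha>) \<partial>D) \<le> ennreal (PLT k))
     \<and> (\<forall>m. (\<integral>\<^sup>+ \<alpha>. ennreal (\<Sum>k\<in>UNIV. gg \<alpha> k m * p k \<alpha>) \<partial>D) \<le> ennreal (GLT m))"

definition optimal_policy :: "('k::finite, 'm::finite) chstate measure \<Rightarrow> ('k \<Rightarrow> real) \<Rightarrow> ('m \<Rightarrow> real)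
    \<Rightarrow> ('k \<Rightarrow> ('k, 'm) chstate \<Rightarrow> real) \<Rightarrow> bool" where
  "optimal_policy D PLT GLT p \<longleftrightarrow> feasible D PLT GLT p
     \<and> (\<forall>q. feasible D PLT GLT q \<longrightarrow> rate D q \<le> rate D p)"

definition integrable_policy :: "('k::finite, 'm::finite) chstate measure \<Rightarrow> ('k \<Rightarrow> ('k, 'm) chstate \<Rightarrow> real) \<Rightarrow> bool" where
  "integrable_policy D p \<longleftrightarrow> policy D p
     \<and> (\<forall>k. integrable D (p k))
     \<and> (\<forall>m. integrable D (\<lambda>\<alpha>. \<Sum>k\<in>UNIV. gg \<alpha> k m * p k \<alpha>))
     \<and> integrable D (\<lambda>\<alpha>. ln (1 + (\<Sum>k\<in>UNIV. hh \<alpha> k * p k \<alpha>)))"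

definition dual_fun :: "('k::finite, 'm::finite) chstate measure \<Rightarrow> ('k \<Rightarrow> real) \<Rightarrow> ('m \<Rightarrow> real)
    \<Rightarrow> ('k \<Rightarrow> real) \<Rightarrow> ('m \<Rightarrow> real) \<Rightarrow> ereal" where
  "dual_fun D PLT GLT lam mu =
     (SUP p \<in> {p. integrable_policy D p}.
        ereal ((\<integral>\<alpha>. ln (1 + (\<Sum>k\<in>UNIV. hh \<alpha> k * p k \<alpha>)) \<partial>D)
          - (\<Sum>k\<in>UNIV. lam k * ((\<integral>\<alpha>. p k \<alpha> \<partial>D) - PLT k))
          - (\<Sum>m\<in>UNIV. mu m * ((\<integral>\<alpha>. (\<Sum>k\<in>UNIV. gg \<alpha> k m * p k \<alpha>) \<partial>D) - GLT m))))"

definition dual_optimal :: "('k::finite, 'm::finite) chstate measure \<Rightarrow> ('k \<Rightarrow> real) \<Rightarrow> ('m \<Rightarrow> real)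
    \<Rightarrow> ('k \<Rightarrow> real) \<Rightarrow> ('m \<Rightarrow> real) \<Rightarrow> bool" where
  "dual_optimal D PLT GLT lam mu \<longleftrightarrow>
     (\<forall>k. 0 \<le> lam k) \<and> (\<forall>m. 0 \<le> mu m) \<and> dual_fun D PLT GLT lam mu < \<infinity>
     \<and> (\<forall>lam' mu'. (\<forall>k. 0 \<le> lam' k) \<and> (\<forall>m. 0 \<le> mu' m) \<longrightarrow>
          dual_fun D PLT GLT lam mu \<le> dual_fun D PLT GLT lam' mu')"

end

theory Submission
  imports Defs
begin

text \<open>Write \<open>c\<^sub>k(\<alpha>) = \<lambda>\<^sub>k + \<Sum>\<^sub>m \<mu>\<^sub>m g\<^sub>k\<^sub>m\<close> for the price of user \<open>k\<close> at the optimal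
  multipliers. Pointwise in \<open>\<alpha>\<close>, the Lagrangian \<open>ln (1 + \<Sum>\<^sub>k h\<^sub>k p\<^sub>k) - \<Sum>\<^sub>k c\<^sub>k p\<^sub>k\<close> is
  maximised by serving only the user with the largest ratio \<open>h\<^sub>k / c\<^sub>k\<close>, with water-filling power
  \<open>(1/c\<^sub>k - 1/h\<^sub>k)\<^sup>+\<close>. Since the joint distribution function is continuous and the gains are
  independent, gains vanish and ratios tie only on null sets; all prices are almost surely positive,
  for otherwise the dual function would be infinite. Perturbing the multipliers up and down and
  invoking their dual optimality shows that this TDMA policy is feasible and satisfies complementary
  slackness, so weak duality makes it optimal.\<close>

section \<open>Pointwise Lagrangian and the TDMA policy\<close>

definition price :: "('k::finite \<Rightarrow> real) \<Rightarrow> ('m::finite \<Rightarrow> real) \<Rightarrow> ('k, 'm) chstate \<Rightarrow> 'k \<Rightarrow> real" where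
  "price l u \<alpha> k = l k + (\<Sum>m\<in>UNIV. u m * gg \<alpha> k m)"

definition tdma_policy :: "('k::finite \<Rightarrow> real) \<Rightarrow> ('m::finite \<Rightarrow> real) \<Rightarrow> 'k \<Rightarrow> ('k, 'm) chstate \<Rightarrow> real" where
  "tdma_policy l u i \<alpha> = (if \<forall>j. j \<noteq> i \<longrightarrow> hh \<alpha> j / price l u \<alpha> j < hh \<alpha> i / price l u \<alpha> i
      then max 0 (1 / price l u \<alpha> i - 1 / hh \<alpha> i) else 0)"

text \<open>Its expectation plus \<open>budget l u\<close> is the Lagrangian inside \<open>dual_fun\<close>
  (\<open>dual_fun_eq_SUP\<close>).\<close>
definition pw_lagrangian :: "('k::finite \<Rightarrow> real) \<Rightarrow> ('m::finite \<Rightarrow> real) \<Rightarrow> ('k, 'm) chstate \<Rightarrow> ('k \<Rightarrow> real) \<Rightarrow> real" where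
  "pw_lagrangian l u \<alpha> x = ln (1 + (\<Sum>k\<in>UNIV. hh \<alpha> k * x k)) - (\<Sum>k\<in>UNIV. price l u \<alpha> k * x k)"

definition pw_dual :: "('k::finite \<Rightarrow> real) \<Rightarrow> ('m::finite \<Rightarrow> real) \<Rightarrow> ('k, 'm) chstate \<Rightarrow> real" where
  "pw_dual l u \<alpha> = pw_lagrangian l u \<alpha> (\<lambda>k. tdma_policy l u k \<alpha>)"

definition generic_state :: "('k::finite \<Rightarrow> real) \<Rightarrow> ('m::finite \<Rightarrow> real) \<Rightarrow> ('k, 'm) chstate \<Rightarrow> bool" where
  "generic_state l u \<alpha> \<longleftrightarrow> (\<forall>k. 0 < hh \<alpha> k) \<and> (\<forall>k m. 0 \<le> gg \<alpha> k m) \<and> (\<forall>k. 0 < price l u \<alpha> k)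
     \<and> inj (\<lambda>k. hh \<alpha> k / price l u \<alpha> k)"

lemma sum_price_mult:
  "(\<Sum>k\<in>UNIV. price l u \<alpha> k * x k) = (\<Sum>k\<in>UNIV. l k * x k) + (\<Sum>m\<in>UNIV. u m * (\<Sum>k\<in>UNIV. gg \<alpha> k m * x k))"
proof -
  have "(\<Sum>m\<in>UNIV. u m * (\<Sum>k\<in>UNIV. gg \<alpha> k m * x k)) = (\<Sum>k\<in>UNIV. (\<Sum>m\<in>UNIV. u m * gg \<alpha> k m) * x k)"
    unfolding sum_distrib_left sum_distrib_right mult.assoc by (rule sum.swap)
  then show ?thesis
    by (simp add: price_def distrib_right sum.distrib)
qed

lemma price_add_scaled:
  "price (\<lambda>k. l k + t * l' k) (\<lambda>m. u m + t * u' m) \<alpha> k = price l u \<alpha> k + t * price l' u' \<alpha> k"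
  by (simp add: price_def sum.distrib sum_distrib_left algebra_simps)

lemma pw_lagrangian_add_scaled:
  "pw_lagrangian (\<lambda>k. l k + t * l' k) (\<lambda>m. u m + t * u' m) \<alpha> x
     = pw_lagrangian l u \<alpha> x - t * (\<Sum>k\<in>UNIV. price l' u' \<alpha> k * x k)"
  by (simp add: pw_lagrangian_def price_add_scaled distrib_right sum.distrib sum_distrib_left mult.assoc)

lemma tdma_policy_nonneg: "0 \<le> tdma_policy l u i \<alpha>"
  by (simp add: tdma_policy_def)

lemma tdma_policy_pos_imp:
  assumes "0 < tdma_policy l u i \<alpha>"
  shows "\<And>j. j \<noteq> i \<Longrightarrow> hh \<alpha> j / price l u \<alpha> j < hh \<alpha> i / price l u \<alpha> i"
    and "tdma_policy l u i \<alpha> = max 0 (1 / price l u \<alpha> i - 1 / hh \<alpha> i)"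
  using assms by (auto simp: tdma_policy_def split: if_splits)

lemma tdma_policy_single_user:
  "(\<forall>i j. 0 < tdma_policy l u i \<alpha> \<and> 0 < tdma_policy l u j \<alpha> \<longrightarrow> i = j)
   \<and> (\<forall>i. 0 < tdma_policy l u i \<alpha> \<longrightarrow>
        (\<forall>j. j \<noteq> i \<longrightarrow> hh \<alpha> j / price l u \<alpha> j \<le> hh \<alpha> i / price l u \<alpha> i)
        \<and> tdma_policy l u i \<alpha> = max 0 (1 / price l u \<alpha> i - 1 / hh \<alpha> i))"
  by (metis less_asym less_imp_le tdma_policy_pos_imp)

lemma tdma_policy_argmax:
  assumes "\<And>j. j \<noteq> i \<Longrightarrow> hh \<alpha> j / price l u \<alpha> j < hh \<alpha> i / price l u \<alpha> i"
  shows "tdma_policy l u i \<alpha> = max 0 (1 / price l u \<alpha> i - 1 / hh \<alpha> i)"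
    and "\<And>j. j \<noteq> i \<Longrightarrow> tdma_policy l u j \<alpha> = 0"
  using assms by (auto simp: tdma_policy_def dest: less_asym)

lemma tdma_policy_le_inverse_price:
  "0 < hh \<alpha> i \<Longrightarrow> 0 < price l u \<alpha> i \<Longrightarrow> tdma_policy l u i \<alpha> \<le> 1 / price l u \<alpha> i"
  by (simp add: tdma_policy_def)

lemma generic_state_argmax:
  assumes "generic_state l u \<alpha>"
  obtains i where "\<And>j. j \<noteq> i \<Longrightarrow> hh \<alpha> j / price l u \<alpha> j < hh \<alpha> i / price l u \<alpha> i"
proof -
  let ?r = "\<lambda>k. hh \<alpha> k / price l u \<alpha> k"
  have "Max (range ?r) \<in> range ?r" by (rule Max_in) auto
  then obtain i where i: "?r i = Max (range ?r)" by (auto simp del: Max_in)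
  have inj: "inj ?r" using assms by (simp add: generic_state_def)
  have "?r j < ?r i" if "j \<noteq> i" for j
  proof -
    have "?r j \<le> ?r i" unfolding i by (rule Max_ge) auto
    moreover have "?r j \<noteq> ?r i" using inj that unfolding inj_def by blast
    ultimately show ?thesis by simp
  qed
  then show ?thesis by (rule that)
qed

lemma ln_one_plus_water_filling:
  fixes h c x :: real
  assumes h: "0 < h" and c: "0 < c" and x: "0 \<le> x"
  shows "ln (1 + h * x) - c * x \<le> ln (1 + h * max 0 (1 / c - 1 / h)) - c * max 0 (1 / c - 1 / h)"
proof (cases "h \<le> c")
  case True
  then have "max 0 (1 / c - 1 / h) = 0" using h c by (simp add: frac_le)
  moreover have "ln (1 + h * x) \<le> h * x" using ln_le_minus_one[of "1 + h * x"] h x by (simp add: add_pos_nonneg)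
  moreover have "h * x \<le> c * x" using True x by (rule mult_right_mono)
  ultimately show ?thesis by simp
next
  case False
  then have w: "max 0 (1 / c - 1 / h) = 1 / c - 1 / h" using h c by (simp add: frac_le)
  have hx: "0 < 1 + h * x" using h x by (simp add: add_pos_nonneg)
  have "ln (c * (1 + h * x) / h) \<le> c * (1 + h * x) / h - 1"
    using h c hx by (intro ln_le_minus_one) simp
  moreover have "ln (c * (1 + h * x) / h) = ln c + ln (1 + h * x) - ln h"
    using h c hx by (simp add: ln_div ln_mult)
  moreover have "c * (1 + h * x) / h = c / h + c * x"
    using h by (simp add: field_simps)
  moreover have "ln (1 + h * (1 / c - 1 / h)) = ln h - ln c" and "c * (1 / c - 1 / h) = 1 - c / h"
    using h c by (simp_all add: field_simps ln_div)
  ultimately show ?thesis by (simp add: w)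
qed

text \<open>The pointwise Lagrangian is maximised by giving all power to the user with the best
  gain-to-price ratio, which then faces a single-user water-filling problem.\<close>
lemma pw_lagrangian_le_pw_dual:
  assumes g: "generic_state l u \<alpha>" and x: "\<And>k. 0 \<le> x k"
  shows "pw_lagrangian l u \<alpha> x \<le> pw_dual l u \<alpha>"
proof -
  obtain i where i: "\<And>j. j \<noteq> i \<Longrightarrow> hh \<alpha> j / price l u \<alpha> j < hh \<alpha> i / price l u \<alpha> i"
    using generic_state_argmax[OF g] by blast
  have h: "\<And>k. 0 < hh \<alpha> k" and c: "\<And>k. 0 < price l u \<alpha> k"
    using g by (auto simp: generic_state_def)
  define s where "s = (\<Sum>k\<in>UNIV. hh \<alpha> k * x k)"
  have "0 \<le> s" unfolding s_def using h x by (intro sum_nonneg) (simp add: less_imp_le)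
  have "price l u \<alpha> i / hh \<alpha> i * hh \<alpha> k \<le> price l u \<alpha> k" for k
  proof -
    have "hh \<alpha> k / price l u \<alpha> k \<le> hh \<alpha> i / price l u \<alpha> i"
      using i[of k] by (cases "k = i") auto
    then have "hh \<alpha> k * price l u \<alpha> i \<le> hh \<alpha> i * price l u \<alpha> k"
      using c[of i] c[of k] by (simp add: divide_le_eq le_divide_eq mult.commute)
    then show ?thesis using h[of i] by (simp add: pos_divide_le_eq mult.commute)
  qed
  then have "price l u \<alpha> i / hh \<alpha> i * s \<le> (\<Sum>k\<in>UNIV. price l u \<alpha> k * x k)"
    unfolding s_def sum_distrib_left mult.assoc[symmetric] using x by (intro sum_mono mult_right_mono)
  then have "pw_lagrangian l u \<alpha> x \<le> ln (1 + hh \<alpha> i * (s / hh \<alpha> i)) - price l u \<alpha> i * (s / hh \<alpha> i)"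
    using h[of i] by (simp add: pw_lagrangian_def s_def)
  also have "\<dots> \<le> ln (1 + hh \<alpha> i * tdma_policy l u i \<alpha>) - price l u \<alpha> i * tdma_policy l u i \<alpha>"
    using ln_one_plus_water_filling[OF h[of i] c[of i], of "s / hh \<alpha> i"] \<open>0 \<le> s\<close> h[of i]
    by (simp add: tdma_policy_argmax(1)[OF i])
  also have "\<dots> = pw_dual l u \<alpha>"
  proof -
    have "(\<Sum>k\<in>UNIV. f k * tdma_policy l u k \<alpha>) = f i * tdma_policy l u i \<alpha>" for f
      using tdma_policy_argmax(2)[OF i] by (intro sum.mono_neutral_right[where S = "{i}", simplified]) auto
    then show ?thesis by (simp add: pw_dual_def pw_lagrangian_def)
  qed
  finally show ?thesis .
qed

lemma pw_dual_nonneg: "generic_state l u \<alpha> \<Longrightarrow> 0 \<le> pw_dual l u \<alpha>"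
  using pw_lagrangian_le_pw_dual[of l u \<alpha> "\<lambda>_. 0"] by (simp add: pw_lagrangian_def)

lemma tdma_policy_tendsto:
  assumes g: "generic_state l u \<alpha>"
    and L: "\<And>k. (\<lambda>n. L n k) \<longlonglongrightarrow> l k" and U: "\<And>m. (\<lambda>n. U n m) \<longlonglongrightarrow> u m"
  shows "(\<lambda>n. tdma_policy (L n) (U n) i \<alpha>) \<longlonglongrightarrow> tdma_policy l u i \<alpha>"
proof -
  have c: "price l u \<alpha> k \<noteq> 0" for k using g unfolding generic_state_def by (metis less_irrefl)
  have C: "(\<lambda>n. price (L n) (U n) \<alpha> k) \<longlonglongrightarrow> price l u \<alpha> k" for k
    unfolding price_def using L U by (intro tendsto_intros)
  have R: "(\<lambda>n. hh \<alpha> k / price (L n) (U n) \<alpha> k) \<longlonglongrightarrow> hh \<alpha> k / price l u \<alpha> k" for k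
    using C c by (intro tendsto_intros)
  have less: "eventually (\<lambda>n. hh \<alpha> j / price (L n) (U n) \<alpha> j < hh \<alpha> k / price (L n) (U n) \<alpha> k) sequentially"
    if "hh \<alpha> j / price l u \<alpha> j < hh \<alpha> k / price l u \<alpha> k" for j k
    using order_tendstoD(1)[OF tendsto_diff[OF R[of k] R[of j]], of 0] that by simp
  show ?thesis
  proof (cases "\<forall>j. j \<noteq> i \<longrightarrow> hh \<alpha> j / price l u \<alpha> j < hh \<alpha> i / price l u \<alpha> i")
    case True
    then have "eventually (\<lambda>n. \<forall>j. j \<noteq> i \<longrightarrow>
        hh \<alpha> j / price (L n) (U n) \<alpha> j < hh \<alpha> i / price (L n) (U n) \<alpha> i) sequentially"
    proof (intro eventually_all_finite)
      fix j
      show "eventually (\<lambda>n. j \<noteq> i \<longrightarrow>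
          hh \<alpha> j / price (L n) (U n) \<alpha> j < hh \<alpha> i / price (L n) (U n) \<alpha> i) sequentially"
        using less[of j i] True by (cases "j = i") (auto elim: eventually_mono)
    qed
    then have "eventually (\<lambda>n. tdma_policy (L n) (U n) i \<alpha>
        = max 0 (1 / price (L n) (U n) \<alpha> i - 1 / hh \<alpha> i)) sequentially"
      by (auto simp: tdma_policy_def elim: eventually_mono)
    moreover have "(\<lambda>n. max 0 (1 / price (L n) (U n) \<alpha> i - 1 / hh \<alpha> i))
        \<longlonglongrightarrow> max 0 (1 / price l u \<alpha> i - 1 / hh \<alpha> i)"
      using C c by (intro tendsto_intros)
    moreover have "tdma_policy l u i \<alpha> = max 0 (1 / price l u \<alpha> i - 1 / hh \<alpha> i)"
      using True unfolding tdma_policy_def by (rule if_P)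
    ultimately show ?thesis by (simp add: tendsto_cong)
  next
    case False
    then obtain j where j: "j \<noteq> i" "\<not> hh \<alpha> j / price l u \<alpha> j < hh \<alpha> i / price l u \<alpha> i"
      by blast
    moreover have "hh \<alpha> j / price l u \<alpha> j \<noteq> hh \<alpha> i / price l u \<alpha> i"
      using g j(1) unfolding generic_state_def inj_def by blast
    ultimately have j: "j \<noteq> i" "hh \<alpha> i / price l u \<alpha> i < hh \<alpha> j / price l u \<alpha> j"
      by auto
    from less[OF j(2)] have "eventually (\<lambda>n. tdma_policy (L n) (U n) i \<alpha> = 0) sequentially"
      using j(1) by (auto simp: tdma_policy_def elim!: eventually_mono dest!: spec[of _ j])
    moreover have "tdma_policy l u i \<alpha> = 0"
      using False unfolding tdma_policy_def by (rule if_not_P)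
    ultimately show ?thesis by (simp add: tendsto_cong)
  qed
qed

section \<open>Null sets of a continuous distribution\<close>

text \<open>The face lies in the difference of the orthants below \<open>x\<close> and below \<open>x - t b\<close>, whose
  mass is a cdf increment that vanishes as \<open>t \<rightarrow> 0\<close>.\<close>
lemma joint_cdf_null_face:
  fixes D :: "'a::euclidean_space measure"
  assumes prob: "prob_space D" and sD: "sets D = sets borel"
    and cont: "isCont (joint_cdf D) x" and b: "b \<in> Basis"
  shows "{y. y \<bullet> b = x \<bullet> b \<and> (\<forall>i\<in>Basis. y \<bullet> i \<le> x \<bullet> i)} \<in> null_sets D"
proof -
  interpret prob_space D by (rule prob)
  define Q where "Q z = {y. \<forall>i\<in>Basis. y \<bullet> i \<le> z \<bullet> i}" for z :: 'a
  define S where "S = {y. y \<bullet> b = x \<bullet> b} \<inter> Q x"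
  have closed_Q: "closed (Q z)" for z
  proof -
    have "Q z = (\<Inter>i\<in>Basis. {y. i \<bullet> y \<le> z \<bullet> i})" by (auto simp: Q_def inner_commute)
    then show ?thesis by (simp add: closed_INT closed_halfspace_le)
  qed
  then have Q: "Q z \<in> sets D" for z unfolding sD by (rule borel_closed)
  have "closed S" unfolding S_def using closed_Q by (intro closed_Int closed_Collect_eq continuous_intros)
  then have S: "S \<in> sets D" unfolding sD by (rule borel_closed)
  have le: "measure D S \<le> joint_cdf D x - joint_cdf D (x - t *\<^sub>R b)" if t: "0 < t" for t
  proof -
    have b_inner: "0 \<le> b \<bullet> i" if "i \<in> Basis" for i
      using b that by (cases "b = i") (auto simp: inner_not_same_Basis)
    have sub: "Q (x - t *\<^sub>R b) \<subseteq> Q x"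
      using t b_inner by (fastforce simp: Q_def inner_diff_left intro: order_trans)
    have "S \<subseteq> Q x - Q (x - t *\<^sub>R b)"
      using b t by (auto simp: S_def Q_def inner_diff_left intro!: bexI[of _ b])
    then have "measure D S \<le> measure D (Q x - Q (x - t *\<^sub>R b))"
      using Q by (intro finite_measure_mono) auto
    also have "\<dots> = measure D (Q x) - measure D (Q (x - t *\<^sub>R b))"
      using Q sub by (intro finite_measure_Diff) auto
    finally show ?thesis by (simp add: joint_cdf_def Q_def)
  qed
  have "(\<lambda>n. x - (1 / real (Suc n)) *\<^sub>R b) \<longlonglongrightarrow> x - 0 *\<^sub>R b"
    using LIMSEQ_inverse_real_of_nat unfolding inverse_eq_divide by (intro tendsto_intros)
  then have "(\<lambda>n. joint_cdf D (x - (1 / real (Suc n)) *\<^sub>R b)) \<longlonglongrightarrow> joint_cdf D x"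
    using isCont_tendsto_compose[OF cont] by simp
  then have "(\<lambda>n. joint_cdf D x - joint_cdf D (x - (1 / real (Suc n)) *\<^sub>R b)) \<longlonglongrightarrow> 0"
    by (auto intro: tendsto_eq_intros)
  then have "measure D S \<le> 0"
    using le by (intro LIMSEQ_le_const) auto
  moreover have "{y. y \<bullet> b = x \<bullet> b \<and> (\<forall>i\<in>Basis. y \<bullet> i \<le> x \<bullet> i)} = S"
    unfolding S_def Q_def by blast
  ultimately show ?thesis
    using S measure_nonneg[of D S] by (simp add: emeasure_eq_measure null_sets_def)
qed

lemma continuous_joint_cdf_null_hyperplane:
  fixes D :: "'a::euclidean_space measure"
  assumes prob: "prob_space D" and sD: "sets D = sets borel"
    and cont: "continuous_on UNIV (joint_cdf D)" and b: "b \<in> Basis"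
  shows "{y. y \<bullet> b = a} \<in> null_sets D"
proof -
  define x where "x n = (\<Sum>i\<in>Basis. (if i = b then a else real n) *\<^sub>R i)" for n :: nat
  have x: "x n \<bullet> i = (if i = b then a else real n)" if "i \<in> Basis" for n i
    using that by (simp add: x_def)
  have "{y. y \<bullet> b = x n \<bullet> b \<and> (\<forall>i\<in>Basis. y \<bullet> i \<le> x n \<bullet> i)} \<in> null_sets D" for n
    using cont b by (intro joint_cdf_null_face[OF prob sD])
      (simp_all add: continuous_on_eq_continuous_at)
  then have N: "(\<Union>n. {y. y \<bullet> b = x n \<bullet> b \<and> (\<forall>i\<in>Basis. y \<bullet> i \<le> x n \<bullet> i)}) \<in> null_sets D"
    by (rule null_sets_UN)
  have sub: "{y. y \<bullet> b = a} \<subseteq> (\<Union>n. {y. y \<bullet> b = x n \<bullet> b \<and> (\<forall>i\<in>Basis. y \<bullet> i \<le> x n \<bullet> i)})"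
  proof
    fix y :: 'a assume y: "y \<in> {y. y \<bullet> b = a}"
    obtain n :: nat where n: "(\<Sum>i\<in>Basis. \<bar>y \<bullet> i\<bar>) \<le> real n" using real_arch_simple by blast
    have "y \<bullet> i \<le> x n \<bullet> i" if "i \<in> Basis" for i
    proof -
      have "\<bar>y \<bullet> i\<bar> \<le> (\<Sum>i\<in>Basis. \<bar>y \<bullet> i\<bar>)" using that by (intro member_le_sum) auto
      then show ?thesis using that y n x[OF that] by auto
    qed
    then have "y \<in> {y. y \<bullet> b = x n \<bullet> b \<and> (\<forall>i\<in>Basis. y \<bullet> i \<le> x n \<bullet> i)}"
      using y x[OF b] by simp
    then show "y \<in> (\<Union>n. {y. y \<bullet> b = x n \<bullet> b \<and> (\<forall>i\<in>Basis. y \<bullet> i \<le> x n \<bullet> i)})"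
      by blast
  qed
  have "{y. y \<bullet> b = a} \<in> sets D"
    unfolding sD by (intro borel_closed closed_Collect_eq continuous_intros)
  then show ?thesis by (rule null_sets_subset[OF N _ sub])
qed

text \<open>Integrate out the independent coordinate: for each value of the others, the event is a
  single atom of \<open>X i\<close>, which has probability zero.\<close>
lemma (in prob_space) indep_vars_null_eq_fun:
  fixes X :: "'i \<Rightarrow> 'a \<Rightarrow> real"
  assumes indep: "indep_vars (\<lambda>_. borel) X I" and i: "i \<in> I"
    and no_atom: "\<And>a. {\<omega> \<in> space M. X i \<omega> = a} \<in> null_sets M"
    and F[measurable]: "F \<in> borel_measurable (PiM (I - {i}) (\<lambda>_. borel))"
  shows "{\<omega> \<in> space M. X i \<omega> = F (restrict (\<lambda>j. X j \<omega>) (I - {i}))} \<in> null_sets M"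
proof -
  define PL where "PL = (PiM (I - {i}) (\<lambda>_. borel) :: ('i \<Rightarrow> real) measure)"
  define PI where "PI = (PiM {i} (\<lambda>_. borel) :: ('i \<Rightarrow> real) measure)"
  define Y where "Y \<omega> = restrict (\<lambda>j. X j \<omega>) (I - {i})" for \<omega>
  define Z where "Z \<omega> = restrict (\<lambda>j. X j \<omega>) {i}" for \<omega>
  have "indep_var PL Y PI Z"
    unfolding PL_def Y_def PI_def Z_def using i by (intro indep_var_restrict[OF indep]) auto
  then have rv: "random_variable PL Y" "random_variable PI Z"
    and prod: "distr M PL Y \<Otimes>\<^sub>M distr M PI Z = distr M (PL \<Otimes>\<^sub>M PI) (\<lambda>\<omega>. (Y \<omega>, Z \<omega>))"
    unfolding indep_var_distribution_eq by auto
  have comp[measurable]: "(\<lambda>f. f i) \<in> borel_measurable PI"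
    unfolding PI_def by (rule measurable_component_singleton) simp
  define S where "S = {p \<in> space (PL \<Otimes>\<^sub>M PI). snd p i = F (fst p)}"
  have F': "F \<in> borel_measurable PL" using F by (simp add: PL_def)
  have S: "S \<in> sets (PL \<Otimes>\<^sub>M PI)" unfolding S_def using F' comp by measurable
  interpret Z: prob_space "distr M PI Z" by (rule prob_space_distr[OF rv(2)])
  have "emeasure M ((\<lambda>\<omega>. (Y \<omega>, Z \<omega>)) -` S \<inter> space M) = emeasure (distr M PL Y \<Otimes>\<^sub>M distr M PI Z) S"
    using S rv by (simp add: prod emeasure_distr)
  also have "\<dots> = (\<integral>\<^sup>+y. emeasure (distr M PI Z) (Pair y -` S) \<partial>distr M PL Y)"
    using S by (intro Z.emeasure_pair_measure_alt) simp
  also have "\<dots> = (\<integral>\<^sup>+y. 0 \<partial>distr M PL Y)"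
  proof (rule nn_integral_cong)
    fix y assume "y \<in> space (distr M PL Y)"
    then have "Pair y -` S = {z \<in> space PI. z i = F y}" by (auto simp: S_def space_pair_measure)
    moreover have "{z \<in> space PI. z i = F y} \<in> sets PI" by measurable
    moreover have "Z -` {z \<in> space PI. z i = F y} \<inter> space M = {\<omega> \<in> space M. X i \<omega> = F y}"
      using measurable_space[OF rv(2)] by (auto simp: Z_def)
    ultimately show "emeasure (distr M PI Z) (Pair y -` S) = 0"
      using rv null_setsD1[OF no_atom[of "F y"]] by (simp add: emeasure_distr)
  qed
  finally have "emeasure M ((\<lambda>\<omega>. (Y \<omega>, Z \<omega>)) -` S \<inter> space M) = 0" by simp
  moreover have "(\<lambda>\<omega>. (Y \<omega>, Z \<omega>)) -` S \<inter> space M = {\<omega> \<in> space M. X i \<omega> = F (Y \<omega>)}"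
    using measurable_space[OF rv(1)] measurable_space[OF rv(2)]
    by (auto simp: S_def Y_def Z_def space_pair_measure)
  moreover have "(\<lambda>\<omega>. (Y \<omega>, Z \<omega>)) -` S \<inter> space M \<in> sets M"
    using S rv by measurable
  ultimately show ?thesis by (simp add: null_sets_def Y_def)
qed

section \<open>The channel model\<close>

definition gain_axis :: "'k + ('k \<times> 'm) \<Rightarrow> ('k::finite, 'm::finite) chstate" where
  "gain_axis i = (case i of Inl k \<Rightarrow> (axis k 1, 0) | Inr km \<Rightarrow> (0, axis km 1))"

lemma gain_axis_Basis: "gain_axis i \<in> Basis"
  by (cases i) (auto simp: gain_axis_def Basis_prod_def Basis_vec_def)

lemma inner_gain_axis: "\<alpha> \<bullet> gain_axis i = gain_coord i \<alpha>"
  by (cases i; cases \<alpha>) (auto simp: gain_axis_def gain_coord_def hh_def gg_def inner_axis)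

lemma abs_gain_coord_le_norm: "\<bar>gain_coord i \<alpha>\<bar> \<le> norm \<alpha>"
  using Basis_le_norm[OF gain_axis_Basis, of \<alpha> i] by (simp add: inner_gain_axis)

definition truncation :: "nat \<Rightarrow> ('k \<Rightarrow> ('k, 'm) chstate \<Rightarrow> real) \<Rightarrow> ('k::finite, 'm::finite) chstate set" where
  "truncation n p = {\<alpha>. norm \<alpha> \<le> real n \<and> (\<forall>k. p k \<alpha> \<le> real n)}"

lemma truncation_mono: "n \<le> n' \<Longrightarrow> truncation n p \<subseteq> truncation n' p"
  by (auto simp: truncation_def intro: order_trans)

lemma ex_mem_truncation:
  assumes p: "\<And>k. 0 \<le> p k \<alpha>"
  shows "\<exists>n. \<alpha> \<in> truncation n p"
proof -
  obtain n :: nat where n: "norm \<alpha> + (\<Sum>k\<in>UNIV. p k \<alpha>) \<le> real n"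
    using real_arch_simple by blast
  have "p k \<alpha> \<le> (\<Sum>k\<in>UNIV. p k \<alpha>)" for k
    using p by (intro member_le_sum) auto
  then have "p k \<alpha> \<le> real n" for k
    using n norm_ge_zero[of \<alpha>] by (smt (verit))
  moreover have "0 \<le> (\<Sum>k\<in>UNIV. p k \<alpha>)"
    using p by (intro sum_nonneg) auto
  ultimately have "\<alpha> \<in> truncation n p"
    using n by (simp add: truncation_def)
  then show ?thesis ..
qed

locale cognitive_mac =
  fixes D :: "('k::finite, 'm::finite) chstate measure"
    and PLT :: "'k \<Rightarrow> real" and GLT :: "'m \<Rightarrow> real"
  assumes prob: "prob_space D"
    and sets_D: "sets D = sets borel"
    and gains_nonneg: "AE \<alpha> in D. (\<forall>k. 0 \<le> hh \<alpha> k) \<and> (\<forall>k m. 0 \<le> gg \<alpha> k m)"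
    and cdf_continuous: "continuous_on UNIV (joint_cdf D)"
    and gains_indep: "prob_space.indep_vars D (\<lambda>_. borel) gain_coord UNIV"
    and PLT_nonneg: "\<And>k. 0 \<le> PLT k" and GLT_nonneg: "\<And>m. 0 \<le> GLT m"
begin

sublocale prob_space D by (rule prob)

definition budget :: "('k \<Rightarrow> real) \<Rightarrow> ('m \<Rightarrow> real) \<Rightarrow> real" where
  "budget l u = (\<Sum>k\<in>UNIV. l k * PLT k) + (\<Sum>m\<in>UNIV. u m * GLT m)"

lemma budget_add_scaled:
  "budget (\<lambda>k. l k + t * l' k) (\<lambda>m. u m + t * u' m) = budget l u + t * budget l' u'"
  by (simp add: budget_def sum.distrib sum_distrib_left algebra_simps)

lemma space_D: "space D = UNIV"
  using sets_eq_imp_space_eq[OF sets_D] by simp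

lemma ident_borel_measurable[measurable]: "(\<lambda>\<alpha>. \<alpha>) \<in> borel_measurable D"
  by (rule measurable_ident_sets[OF sets_D])

lemma gain_coord_measurable[measurable]: "gain_coord i \<in> borel_measurable D"
  using gains_indep unfolding indep_vars_def by auto

lemma hh_measurable[measurable]: "(\<lambda>\<alpha>. hh \<alpha> k) \<in> borel_measurable D"
proof -
  have eq: "(\<lambda>\<alpha>. hh \<alpha> k) = gain_coord (Inl k)" by (auto simp: gain_coord_def)
  show ?thesis unfolding eq by (rule gain_coord_measurable)
qed

lemma gg_measurable[measurable]: "(\<lambda>\<alpha>. gg \<alpha> k m) \<in> borel_measurable D"
proof -
  have eq: "(\<lambda>\<alpha>. gg \<alpha> k m) = gain_coord (Inr (k, m))" by (auto simp: gain_coord_def)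
  show ?thesis unfolding eq by (rule gain_coord_measurable)
qed

lemma price_measurable[measurable]: "(\<lambda>\<alpha>. price l u \<alpha> k) \<in> borel_measurable D"
  unfolding price_def by measurable

lemma tdma_policy_measurable[measurable]: "tdma_policy l u i \<in> borel_measurable D"
  unfolding tdma_policy_def by measurable

lemma pw_lagrangian_measurable[measurable]:
  assumes [measurable]: "\<And>k. x k \<in> borel_measurable D"
  shows "(\<lambda>\<alpha>. pw_lagrangian l u \<alpha> (\<lambda>k. x k \<alpha>)) \<in> borel_measurable D"
  unfolding pw_lagrangian_def by measurable

lemma pw_dual_measurable[measurable]: "pw_dual l u \<in> borel_measurable D"
  unfolding pw_dual_def by measurable

lemma gain_coord_null: "{\<alpha> \<in> space D. gain_coord i \<alpha> = a} \<in> null_sets D"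
  using continuous_joint_cdf_null_hyperplane[OF prob sets_D cdf_continuous gain_axis_Basis, of i a]
  by (simp add: inner_gain_axis space_D)

lemma AE_gains_pos: "AE \<alpha> in D. (\<forall>k. 0 < hh \<alpha> k) \<and> (\<forall>k m. 0 < gg \<alpha> k m)"
proof -
  have "AE \<alpha> in D. gain_coord i \<alpha> \<noteq> 0" for i
    by (rule AE_I'[OF gain_coord_null[of i 0]]) auto
  then have "AE \<alpha> in D. \<forall>i. gain_coord i \<alpha> \<noteq> 0"
    by (rule eventually_all_finite)
  then show ?thesis using gains_nonneg
  proof eventually_elim
    case (elim \<alpha>)
    have "hh \<alpha> k \<noteq> 0" "gg \<alpha> k m \<noteq> 0" for k m
      using elim(1)[rule_format, of "Inl k"] elim(1)[rule_format, of "Inr (k, m)"]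
      by (simp_all add: gain_coord_def)
    then show ?case using elim(2) by (auto simp: order.strict_iff_order)
  qed
qed

lemma ex_pos_measure_gain_ge:
  "\<exists>n::nat. 0 < measure D {\<alpha>. norm \<alpha> \<le> real n \<and> 1 \<le> real n * hh \<alpha> k}"
proof (rule ccontr)
  define B where "B n = {\<alpha> :: ('k, 'm) chstate. norm \<alpha> \<le> real n \<and> 1 \<le> real n * hh \<alpha> k}" for n :: nat
  assume "\<not> ?thesis"
  then have "measure D (B n) \<le> 0" for n by (auto simp: B_def not_less)
  then have "measure D (B n) = 0" for n using measure_nonneg[of D "B n"] by (simp add: order.antisym)
  moreover have "B n \<in> sets D" for n
  proof -
    have "B n = {\<alpha> \<in> space D. norm \<alpha> \<le> real n \<and> 1 \<le> real n * hh \<alpha> k}" by (simp add: B_def space_D)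
    also have "\<dots> \<in> sets D" by measurable
    finally show ?thesis .
  qed
  ultimately have "B n \<in> null_sets D" for n
    by (simp add: emeasure_eq_measure null_sets_def)
  then have "AE \<alpha> in D. \<alpha> \<notin> (\<Union>n. B n)" by (intro AE_not_in null_sets_UN)
  then have "AE \<alpha> in D. False" using AE_gains_pos
  proof eventually_elim
    case (elim \<alpha>)
    obtain n :: nat where n: "norm \<alpha> + 1 / hh \<alpha> k \<le> real n" using real_arch_simple by blast
    have h: "0 < hh \<alpha> k" using elim by blast
    then have "norm \<alpha> \<le> real n" using n by (smt (verit) divide_pos_pos)
    moreover have "1 / hh \<alpha> k \<le> real n" using n norm_ge_zero[of \<alpha>] by linarith
    then have "1 \<le> real n * hh \<alpha> k" using h by (simp add: divide_le_eq)
    ultimately have "\<alpha> \<in> B n" by (simp add: B_def)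
    then show False using elim by blast
  qed
  then show False by simp
qed

text \<open>A tie between the gain-to-price ratios of users \<open>i\<close> and \<open>j\<close> determines \<open>hh \<alpha> i\<close>
  as a function of the other, independent, gains.\<close>
lemma AE_ratio_neq:
  assumes ij: "i \<noteq> j"
  shows "AE \<alpha> in D. 0 < price l u \<alpha> i \<and> 0 < price l u \<alpha> j
           \<longrightarrow> hh \<alpha> i / price l u \<alpha> i \<noteq> hh \<alpha> j / price l u \<alpha> j"
proof -
  define F where "F y = (l i + (\<Sum>m\<in>UNIV. u m * y (Inr (i, m)))) * y (Inl j)
      / (l j + (\<Sum>m\<in>UNIV. u m * y (Inr (j, m))))" for y :: "'k + ('k \<times> 'm) \<Rightarrow> real"
  have [measurable]: "(\<lambda>y. y (Inr (k, m))) \<in> borel_measurable (PiM (UNIV - {Inl i}) (\<lambda>_. borel))"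
    for k :: 'k and m :: 'm by (rule measurable_component_singleton) simp
  have [measurable]: "(\<lambda>y. y (Inl j)) \<in> borel_measurable (PiM (UNIV - {Inl i}) (\<lambda>_. borel))"
    using ij by (intro measurable_component_singleton) simp
  have "F \<in> borel_measurable (PiM (UNIV - {Inl i}) (\<lambda>_. borel))"
    unfolding F_def by measurable
  from indep_vars_null_eq_fun[OF gains_indep _ gain_coord_null this]
  have "{\<alpha> \<in> space D. hh \<alpha> i = price l u \<alpha> i * hh \<alpha> j / price l u \<alpha> j} \<in> null_sets D"
    using ij by (simp add: F_def price_def gain_coord_def)
  then show ?thesis
    by (rule AE_I') (auto simp: field_simps)
qed

lemma AE_generic_state:
  assumes "AE \<alpha> in D. \<forall>k. 0 < price l u \<alpha> k"
  shows "AE \<alpha> in D. generic_state l u \<alpha>"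
proof -
  have "AE \<alpha> in D. \<forall>i j. i \<noteq> j \<longrightarrow> 0 < price l u \<alpha> i \<and> 0 < price l u \<alpha> j
           \<longrightarrow> hh \<alpha> i / price l u \<alpha> i \<noteq> hh \<alpha> j / price l u \<alpha> j"
  proof (intro eventually_all_finite)
    fix i j
    show "AE \<alpha> in D. i \<noteq> j \<longrightarrow> 0 < price l u \<alpha> i \<and> 0 < price l u \<alpha> j
           \<longrightarrow> hh \<alpha> i / price l u \<alpha> i \<noteq> hh \<alpha> j / price l u \<alpha> j"
      by (cases "i = j") (auto intro: AE_ratio_neq)
  qed
  then show ?thesis using assms AE_gains_pos
    by eventually_elim (auto simp: generic_state_def inj_def less_imp_le)
qed


lemma integrable_policy_bounded:
  assumes meas: "\<And>k. q k \<in> borel_measurable D"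
    and bounds: "\<And>k \<alpha>. 0 \<le> q k \<alpha> \<and> q k \<alpha> \<le> N"
    and support: "\<And>k \<alpha>. q k \<alpha> \<noteq> 0 \<Longrightarrow> norm \<alpha> \<le> N"
  shows "integrable_policy D q"
proof -
  have [measurable]: "\<And>k. (\<lambda>\<alpha>. q k \<alpha>) \<in> borel_measurable D" using meas by simp
  have term_le: "\<bar>c * q k \<alpha>\<bar> \<le> N * N" if "\<bar>c\<bar> \<le> norm \<alpha>" for c k \<alpha>
  proof (cases "q k \<alpha> = 0")
    case False
    then have "\<bar>c\<bar> \<le> N" using that support by (meson order_trans)
    then show ?thesis using bounds[of k \<alpha>] by (simp add: abs_mult mult_mono')
  qed simp
  have sum_le: "\<bar>\<Sum>k\<in>UNIV. c k * q k \<alpha>\<bar> \<le> real CARD('k) * (N * N)" if "\<And>k. \<bar>c k\<bar> \<le> norm \<alpha>" for c \<alpha>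
    using order_trans[OF sum_abs sum_mono[of UNIV "\<lambda>k. \<bar>c k * q k \<alpha>\<bar>" "\<lambda>_. N * N"]] term_le that
    by simp
  have h: "\<bar>hh \<alpha> k\<bar> \<le> norm \<alpha>" and g: "\<bar>gg \<alpha> k m\<bar> \<le> norm \<alpha>"
    for \<alpha> :: "('k, 'm) chstate" and k m
    using abs_gain_coord_le_norm[of "Inl k" \<alpha>] abs_gain_coord_le_norm[of "Inr (k, m)" \<alpha>]
    by (simp_all add: gain_coord_def)
  have "integrable D (\<lambda>\<alpha>. ln (1 + (\<Sum>k\<in>UNIV. hh \<alpha> k * q k \<alpha>)))"
  proof (rule integrable_const_bound[where B = "real CARD('k) * (N * N)"])
    show "AE \<alpha> in D. norm (ln (1 + (\<Sum>k\<in>UNIV. hh \<alpha> k * q k \<alpha>))) \<le> real CARD('k) * (N * N)"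
      using gains_nonneg
    proof eventually_elim
      case (elim \<alpha>)
      then have s: "0 \<le> (\<Sum>k\<in>UNIV. hh \<alpha> k * q k \<alpha>)" using bounds by (intro sum_nonneg) simp
      then have "ln (1 + (\<Sum>k\<in>UNIV. hh \<alpha> k * q k \<alpha>)) \<le> (\<Sum>k\<in>UNIV. hh \<alpha> k * q k \<alpha>)"
        by (intro ln_add_one_self_le_self)
      moreover have "\<bar>\<Sum>k\<in>UNIV. hh \<alpha> k * q k \<alpha>\<bar> \<le> real CARD('k) * (N * N)"
        using h by (rule sum_le)
      ultimately show ?case using s by simp
    qed
  qed measurable
  moreover have "integrable D (\<lambda>\<alpha>. \<Sum>k\<in>UNIV. gg \<alpha> k m * q k \<alpha>)" for m
  proof (rule integrable_const_bound[where B = "real CARD('k) * (N * N)"])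
    show "AE \<alpha> in D. norm (\<Sum>k\<in>UNIV. gg \<alpha> k m * q k \<alpha>) \<le> real CARD('k) * (N * N)"
    proof (rule AE_I2)
      fix \<alpha> show "norm (\<Sum>k\<in>UNIV. gg \<alpha> k m * q k \<alpha>) \<le> real CARD('k) * (N * N)"
        using sum_le[of "\<lambda>k. gg \<alpha> k m" \<alpha>, OF g] by simp
    qed
  qed measurable
  moreover have "integrable D (q k)" for k
    using bounds by (intro integrable_const_bound[where B = N]) (auto simp: meas)
  ultimately show ?thesis using meas bounds by (simp add: integrable_policy_def policy_def)
qed

lemma zero_integrable_policy: "integrable_policy D (\<lambda>k \<alpha>. 0)"
  by (rule integrable_policy_bounded[where N = 0]) auto

lemma integrable_policy_truncation:
  assumes [measurable]: "\<And>k. p k \<in> borel_measurable D" and p: "\<And>k \<alpha>. 0 \<le> p k \<alpha>"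
  shows "truncation n p \<in> sets D"
    and "integrable_policy D (\<lambda>k \<alpha>. p k \<alpha> * indicator (truncation n p) \<alpha>)"
proof -
  have "truncation n p = {\<alpha> \<in> space D. norm \<alpha> \<le> real n \<and> (\<forall>k. p k \<alpha> \<le> real n)}"
    by (simp add: truncation_def space_D)
  also have "\<dots> \<in> sets D" by measurable
  finally show T[measurable]: "truncation n p \<in> sets D" .
  show "integrable_policy D (\<lambda>k \<alpha>. p k \<alpha> * indicator (truncation n p) \<alpha>)"
    using p by (intro integrable_policy_bounded)
      (auto simp: truncation_def split: split_indicator split_indicator_asm)
qed

lemma integrable_pw_lagrangian:
  assumes "integrable_policy D p"
  shows "integrable D (\<lambda>\<alpha>. pw_lagrangian l u \<alpha> (\<lambda>k. p k \<alpha>))"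
  using assms unfolding pw_lagrangian_def sum_price_mult integrable_policy_def by simp

lemma dual_fun_eq_SUP:
  "dual_fun D PLT GLT l u = (SUP p \<in> {p. integrable_policy D p}.
      ereal ((\<integral>\<alpha>. pw_lagrangian l u \<alpha> (\<lambda>k. p k \<alpha>) \<partial>D) + budget l u))"
  unfolding dual_fun_def
proof (intro SUP_cong refl arg_cong[where f = ereal])
  fix p assume "p \<in> {p. integrable_policy D p}"
  then have i: "integrable D (p k)" "integrable D (\<lambda>\<alpha>. \<Sum>k\<in>UNIV. gg \<alpha> k m * p k \<alpha>)"
      "integrable D (\<lambda>\<alpha>. ln (1 + (\<Sum>k\<in>UNIV. hh \<alpha> k * p k \<alpha>)))" for k m
    by (auto simp: integrable_policy_def)
  have "(\<integral>\<alpha>. pw_lagrangian l u \<alpha> (\<lambda>k. p k \<alpha>) \<partial>D) = (\<integral>\<alpha>. ln (1 + (\<Sum>k\<in>UNIV. hh \<alpha> k * p k \<alpha>)) \<partial>D)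
      - (\<Sum>k\<in>UNIV. l k * (\<integral>\<alpha>. p k \<alpha> \<partial>D)) - (\<Sum>m\<in>UNIV. u m * (\<integral>\<alpha>. (\<Sum>k\<in>UNIV. gg \<alpha> k m * p k \<alpha>) \<partial>D))"
    unfolding pw_lagrangian_def sum_price_mult using i by (simp add: integral_diff)
  then show "(\<integral>\<alpha>. ln (1 + (\<Sum>k\<in>UNIV. hh \<alpha> k * p k \<alpha>)) \<partial>D)
      - (\<Sum>k\<in>UNIV. l k * ((\<integral>\<alpha>. p k \<alpha> \<partial>D) - PLT k))
      - (\<Sum>m\<in>UNIV. u m * ((\<integral>\<alpha>. (\<Sum>k\<in>UNIV. gg \<alpha> k m * p k \<alpha>) \<partial>D) - GLT m))
    = (\<integral>\<alpha>. pw_lagrangian l u \<alpha> (\<lambda>k. p k \<alpha>) \<partial>D) + budget l u"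
    by (simp add: budget_def right_diff_distrib sum_subtractf)
qed


lemma AE_generic_state_price_ge:
  assumes "AE \<alpha> in D. \<forall>k. 0 < price l u \<alpha> k"
    and "AE \<alpha> in D. \<forall>k. price l u \<alpha> k \<le> price l' u' \<alpha> k"
  shows "AE \<alpha> in D. generic_state l' u' \<alpha>"
  using assms by (intro AE_generic_state) (auto elim!: eventually_rev_mp intro: less_le_trans)

lemma nn_integral_usage_le_budget:
  assumes l: "\<And>k. 0 \<le> l k" and u: "\<And>m. 0 \<le> u m" and q: "feasible D PLT GLT q"
  shows "(\<integral>\<^sup>+\<alpha>. ennreal (\<Sum>k\<in>UNIV. price l u \<alpha> k * q k \<alpha>) \<partial>D) \<le> ennreal (budget l u)"
proof -
  have [measurable]: "q k \<in> borel_measurable D" and q0: "0 \<le> q k \<alpha>" for k \<alpha>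
    using q unfolding feasible_def policy_def by blast+
  have "AE \<alpha> in D. ennreal (\<Sum>k\<in>UNIV. price l u \<alpha> k * q k \<alpha>)
      = (\<Sum>k\<in>UNIV. l k * ennreal (q k \<alpha>)) + (\<Sum>m\<in>UNIV. u m * ennreal (\<Sum>k\<in>UNIV. gg \<alpha> k m * q k \<alpha>))"
    using gains_nonneg
  proof eventually_elim
    case (elim \<alpha>)
    then have "0 \<le> (\<Sum>k\<in>UNIV. gg \<alpha> k m * q k \<alpha>)" for m using q0 by (intro sum_nonneg) simp
    then show ?case using l u q0
      by (simp add: sum_price_mult sum_nonneg sum_ennreal[symmetric] ennreal_mult'')
  qed
  then have "(\<integral>\<^sup>+\<alpha>. ennreal (\<Sum>k\<in>UNIV. price l u \<alpha> k * q k \<alpha>) \<partial>D)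
      = (\<Sum>k\<in>UNIV. l k * (\<integral>\<^sup>+\<alpha>. ennreal (q k \<alpha>) \<partial>D))
        + (\<Sum>m\<in>UNIV. u m * (\<integral>\<^sup>+\<alpha>. ennreal (\<Sum>k\<in>UNIV. gg \<alpha> k m * q k \<alpha>) \<partial>D))"
    by (simp add: nn_integral_cong_AE nn_integral_add nn_integral_sum nn_integral_cmult)
  also have "\<dots> \<le> (\<Sum>k\<in>UNIV. l k * ennreal (PLT k)) + (\<Sum>m\<in>UNIV. u m * ennreal (GLT m))"
    using q unfolding feasible_def by (intro add_mono sum_mono mult_left_mono) auto
  also have "\<dots> = ennreal (budget l u)"
    using l u PLT_nonneg GLT_nonneg
    by (simp add: budget_def sum_nonneg sum_ennreal[symmetric] ennreal_mult'')
  finally show ?thesis .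
qed

end

section \<open>Optimal dual multipliers\<close>

locale cognitive_mac_dual = cognitive_mac D PLT GLT
  for D :: "('k::finite, 'm::finite) chstate measure" and PLT GLT +
  fixes lam :: "'k \<Rightarrow> real" and mu :: "'m \<Rightarrow> real"
  assumes dual_opt: "dual_optimal D PLT GLT lam mu"
begin

lemma lam_nonneg: "0 \<le> lam k" and mu_nonneg: "0 \<le> mu m"
  using dual_opt by (auto simp: dual_optimal_def)

definition dual_value :: real where
  "dual_value = real_of_ereal (dual_fun D PLT GLT lam mu)"

lemma dual_fun_eq_dual_value: "dual_fun D PLT GLT lam mu = ereal dual_value"
proof -
  have "ereal ((\<integral>\<alpha>. pw_lagrangian lam mu \<alpha> (\<lambda>k. 0) \<partial>D) + budget lam mu) \<le> dual_fun D PLT GLT lam mu"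
    unfolding dual_fun_eq_SUP using zero_integrable_policy by (intro SUP_upper) auto
  then have "dual_fun D PLT GLT lam mu \<noteq> -\<infinity>" by auto
  moreover have "dual_fun D PLT GLT lam mu < \<infinity>" using dual_opt by (simp add: dual_optimal_def)
  ultimately show ?thesis unfolding dual_value_def by (cases "dual_fun D PLT GLT lam mu") auto
qed

lemma expectation_pw_lagrangian_le_dual_value:
  assumes "integrable_policy D p"
  shows "(\<integral>\<alpha>. pw_lagrangian lam mu \<alpha> (\<lambda>k. p k \<alpha>) \<partial>D) + budget lam mu \<le> dual_value"
proof -
  have "ereal ((\<integral>\<alpha>. pw_lagrangian lam mu \<alpha> (\<lambda>k. p k \<alpha>) \<partial>D) + budget lam mu) \<le> dual_fun D PLT GLT lam mu"
    unfolding dual_fun_eq_SUP using assms by (intro SUP_upper) auto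
  then show ?thesis by (simp add: dual_fun_eq_dual_value)
qed

lemma dual_value_le:
  assumes l: "\<forall>k. 0 \<le> l k" and u: "\<forall>m. 0 \<le> u m" and g: "AE \<alpha> in D. generic_state l u \<alpha>"
    and i: "integrable D (pw_dual l u)"
  shows "dual_value \<le> (\<integral>\<alpha>. pw_dual l u \<alpha> \<partial>D) + budget l u"
proof -
  have "ereal dual_value \<le> dual_fun D PLT GLT l u"
    using dual_opt l u by (simp add: dual_optimal_def flip: dual_fun_eq_dual_value)
  also have "dual_fun D PLT GLT l u \<le> ereal ((\<integral>\<alpha>. pw_dual l u \<alpha> \<partial>D) + budget l u)"
    unfolding dual_fun_eq_SUP
  proof (rule SUP_least)
    fix p assume "p \<in> {p. integrable_policy D p}"
    then have p: "integrable_policy D p" by simp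
    then have p0: "0 \<le> p k \<alpha>" for k \<alpha> unfolding integrable_policy_def policy_def by blast
    have "(\<integral>\<alpha>. pw_lagrangian l u \<alpha> (\<lambda>k. p k \<alpha>) \<partial>D) \<le> (\<integral>\<alpha>. pw_dual l u \<alpha> \<partial>D)"
      using integrable_pw_lagrangian[OF p] i g
      by (intro integral_mono_AE) (auto elim!: eventually_mono intro: pw_lagrangian_le_pw_dual p0)
    then show "ereal ((\<integral>\<alpha>. pw_lagrangian l u \<alpha> (\<lambda>k. p k \<alpha>) \<partial>D) + budget l u)
        \<le> ereal ((\<integral>\<alpha>. pw_dual l u \<alpha> \<partial>D) + budget l u)" by simp
  qed
  finally show ?thesis by simp
qed

text \<open>If user \<open>k\<close> had price zero, concentrating unbounded power on it over a set of positive
  probability would make the dual function infinite.\<close>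
lemma dual_nondegenerate: "0 < lam k \<or> (\<exists>m. 0 < mu m)"
proof (rule ccontr)
  assume "\<not> ?thesis"
  then have price0: "price lam mu \<alpha> k = 0" for \<alpha>
    using lam_nonneg[of k] mu_nonneg by (auto simp: price_def order.strict_iff_order)
  obtain n :: nat where "0 < measure D {\<alpha>. norm \<alpha> \<le> real n \<and> 1 \<le> real n * hh \<alpha> k}"
    using ex_pos_measure_gain_ge by blast
  moreover define B where "B = {\<alpha> :: ('k, 'm) chstate. norm \<alpha> \<le> real n \<and> 1 \<le> real n * hh \<alpha> k}"
  ultimately have pos: "0 < measure D B" by simp
  have [measurable]: "B \<in> sets D"
  proof -
    have "B = {\<alpha> \<in> space D. norm \<alpha> \<le> real n \<and> 1 \<le> real n * hh \<alpha> k}" by (simp add: B_def space_D)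
    also have "\<dots> \<in> sets D" by measurable
    finally show ?thesis .
  qed
  define M where "M = (dual_value - budget lam mu + 1) / measure D B"
  define c where "c = exp M * real n"
  define q where "q j \<alpha> = (if j = k \<and> \<alpha> \<in> B then c else 0)" for j \<alpha>
  have c0: "0 \<le> c" by (simp add: c_def)
  have q: "integrable_policy D q"
  proof (rule integrable_policy_bounded[where N = "max c (real n)"])
    show "q j \<in> borel_measurable D" for j unfolding q_def by measurable
    show "0 \<le> q j \<alpha> \<and> q j \<alpha> \<le> max c (real n)" for j \<alpha> by (simp add: q_def c0 le_max_iff_disj)
    show "norm \<alpha> \<le> max c (real n)" if "q j \<alpha> \<noteq> 0" for j \<alpha>
      using that by (simp add: q_def B_def split: if_splits)
  qed
  have "M * indicator B \<alpha> \<le> pw_lagrangian lam mu \<alpha> (\<lambda>j. q j \<alpha>)" for \<alpha>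
  proof (cases "\<alpha> \<in> B")
    case True
    have "exp M \<le> hh \<alpha> k * c"
      using True mult_left_mono[of 1 "real n * hh \<alpha> k" "exp M"] by (simp add: B_def c_def ac_simps)
    moreover have "0 < hh \<alpha> k * c" using calculation by (rule less_le_trans[OF exp_gt_zero])
    ultimately have "M \<le> ln (1 + hh \<alpha> k * c)" by (subst ln_ge_iff) auto
    moreover have "(\<Sum>j\<in>UNIV. f j * q j \<alpha>) = f k * c" for f :: "'k \<Rightarrow> real"
      using True by (simp add: q_def if_distrib sum.If_cases)
    ultimately show ?thesis using True by (simp add: pw_lagrangian_def price0)
  qed (simp add: q_def pw_lagrangian_def)
  then have "(\<integral>\<alpha>. M * indicator B \<alpha> \<partial>D) \<le> (\<integral>\<alpha>. pw_lagrangian lam mu \<alpha> (\<lambda>j. q j \<alpha>) \<partial>D)"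
    using integrable_pw_lagrangian[OF q]
    by (intro integral_mono integrable_mult_right integrable_real_indicator) (auto simp: emeasure_eq_measure)
  then have "M * measure D B \<le> (\<integral>\<alpha>. pw_lagrangian lam mu \<alpha> (\<lambda>j. q j \<alpha>) \<partial>D)"
    by simp
  then have "dual_value + 1 \<le> (\<integral>\<alpha>. pw_lagrangian lam mu \<alpha> (\<lambda>j. q j \<alpha>) \<partial>D) + budget lam mu"
    using pos by (simp add: M_def)
  then show False using expectation_pw_lagrangian_le_dual_value[OF q] by simp
qed

lemma AE_price_pos: "AE \<alpha> in D. \<forall>k. 0 < price lam mu \<alpha> k"
proof (intro eventually_all_finite)
  fix k
  show "AE \<alpha> in D. 0 < price lam mu \<alpha> k"
    using AE_gains_pos
  proof eventually_elim
    case (elim \<alpha>)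
    have terms: "0 \<le> mu m * gg \<alpha> k m" for m using elim mu_nonneg[of m] by (simp add: less_imp_le)
    from dual_nondegenerate[of k] show ?case
    proof
      assume "0 < lam k"
      then show ?case using terms by (simp add: price_def add_pos_nonneg sum_nonneg)
    next
      assume "\<exists>m. 0 < mu m"
      then obtain m where "0 < mu m" ..
      then have "0 < (\<Sum>m\<in>UNIV. mu m * gg \<alpha> k m)"
        using elim terms by (intro sum_pos2[of UNIV m]) auto
      then show ?case using lam_nonneg[of k] by (simp add: price_def)
    qed
  qed
qed

lemma AE_generic_state_opt: "AE \<alpha> in D. generic_state lam mu \<alpha>"
  by (rule AE_generic_state[OF AE_price_pos])


text \<open>Truncating the optimal TDMA policy to bounded gains and powers gives integrable policies;
  monotone convergence then bounds the expected pointwise dual.\<close>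
lemma pw_dual_opt_integrable:
  shows "integrable D (pw_dual lam mu)"
    and "(\<integral>\<alpha>. pw_dual lam mu \<alpha> \<partial>D) + budget lam mu \<le> dual_value"
proof -
  let ?A = "\<lambda>n. truncation n (tdma_policy lam mu)"
  define f where "f n \<alpha> = ennreal (pw_dual lam mu \<alpha> * indicator (?A n) \<alpha>)" for n \<alpha>
  note T = integrable_policy_truncation[of "tdma_policy lam mu", OF tdma_policy_measurable tdma_policy_nonneg]
  have AE_nonneg: "AE \<alpha> in D. 0 \<le> pw_dual lam mu \<alpha>"
    using AE_generic_state_opt by eventually_elim (rule pw_dual_nonneg)
  have bound: "(\<integral>\<^sup>+\<alpha>. f n \<alpha> \<partial>D) \<le> ennreal (dual_value - budget lam mu)" for n
  proof -
    have pw: "pw_lagrangian lam mu \<alpha> (\<lambda>k. tdma_policy lam mu k \<alpha> * indicator (?A n) \<alpha>)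
        = pw_dual lam mu \<alpha> * indicator (?A n) \<alpha>" for \<alpha>
      by (cases "\<alpha> \<in> ?A n") (simp_all add: pw_dual_def pw_lagrangian_def)
    have "(\<integral>\<^sup>+\<alpha>. f n \<alpha> \<partial>D) = ennreal (\<integral>\<alpha>. pw_dual lam mu \<alpha> * indicator (?A n) \<alpha> \<partial>D)"
      unfolding f_def using integrable_pw_lagrangian[OF T(2)[of n], of lam mu] AE_nonneg
      by (intro nn_integral_eq_integral) (auto simp: pw elim!: eventually_mono split: split_indicator)
    also have "\<dots> \<le> ennreal (dual_value - budget lam mu)"
      using expectation_pw_lagrangian_le_dual_value[OF T(2)[of n]] by (intro ennreal_leI) (simp add: pw)
    finally show ?thesis .
  qed
  have inc: "incseq f"
    using truncation_mono
    by (auto simp: incseq_def le_fun_def f_def split: split_indicator intro!: ennreal_leI)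
  have sup: "(SUP n. f n \<alpha>) = ennreal (pw_dual lam mu \<alpha>)" for \<alpha>
  proof (rule antisym)
    show "(SUP n. f n \<alpha>) \<le> ennreal (pw_dual lam mu \<alpha>)"
      by (rule SUP_least) (auto simp: f_def split: split_indicator)
    obtain n where "\<alpha> \<in> ?A n" using ex_mem_truncation[of "tdma_policy lam mu", OF tdma_policy_nonneg] by blast
    then have "f n \<alpha> = ennreal (pw_dual lam mu \<alpha>)" by (simp add: f_def)
    then show "ennreal (pw_dual lam mu \<alpha>) \<le> (SUP n. f n \<alpha>)" by (metis SUP_upper UNIV_I)
  qed
  have "(\<integral>\<^sup>+\<alpha>. ennreal (pw_dual lam mu \<alpha>) \<partial>D) = (SUP n. \<integral>\<^sup>+\<alpha>. f n \<alpha> \<partial>D)"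
    unfolding sup[symmetric] using T(1) by (intro nn_integral_monotone_convergence_SUP inc) (simp add: f_def)
  also have "\<dots> \<le> ennreal (dual_value - budget lam mu)"
    by (rule SUP_least) (rule bound)
  finally have nn: "(\<integral>\<^sup>+\<alpha>. ennreal (pw_dual lam mu \<alpha>) \<partial>D) \<le> ennreal (dual_value - budget lam mu)" .
  then show i: "integrable D (pw_dual lam mu)"
    using AE_nonneg by (intro integrableI_nonneg) (auto simp: top_unique intro: le_less_trans)
  have "ennreal (\<integral>\<alpha>. pw_dual lam mu \<alpha> \<partial>D) \<le> ennreal (dual_value - budget lam mu)"
    using nn nn_integral_eq_integral[OF i AE_nonneg] by simp
  moreover have "budget lam mu \<le> dual_value"
    using expectation_pw_lagrangian_le_dual_value[OF zero_integrable_policy]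
    by (simp add: pw_lagrangian_def)
  ultimately show "(\<integral>\<alpha>. pw_dual lam mu \<alpha> \<partial>D) + budget lam mu \<le> dual_value"
    by simp
qed

lemma budget_le_perturbed:
  assumes l: "\<forall>k. 0 \<le> l k" and u: "\<forall>m. 0 \<le> u m" and g: "AE \<alpha> in D. generic_state l u \<alpha>"
    and W: "integrable D W" and le: "AE \<alpha> in D. pw_dual l u \<alpha> \<le> pw_dual lam mu \<alpha> + W \<alpha>"
  shows "budget lam mu \<le> (\<integral>\<alpha>. W \<alpha> \<partial>D) + budget l u"
proof -
  note opt = pw_dual_opt_integrable
  have W_meas[measurable]: "W \<in> borel_measurable D" using W by simp
  have i: "integrable D (pw_dual l u)"
  proof (rule Bochner_Integration.integrable_bound[OF Bochner_Integration.integrable_add[OF opt(1) W]])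
    show "AE \<alpha> in D. norm (pw_dual l u \<alpha>) \<le> norm (pw_dual lam mu \<alpha> + W \<alpha>)"
      using g le by eventually_elim (use pw_dual_nonneg in force)
  qed measurable
  have "dual_value \<le> (\<integral>\<alpha>. pw_dual l u \<alpha> \<partial>D) + budget l u"
    using l u g i by (rule dual_value_le)
  also have "(\<integral>\<alpha>. pw_dual l u \<alpha> \<partial>D) \<le> (\<integral>\<alpha>. pw_dual lam mu \<alpha> + W \<alpha> \<partial>D)"
    using i opt(1) W le by (intro integral_mono_AE) auto
  finally show ?thesis using opt(2) opt(1) W by simp
qed

lemma AE_usage_tendsto:
  assumes L: "\<And>k. (\<lambda>n. L n k) \<longlonglongrightarrow> lam k" and U: "\<And>m. (\<lambda>n. U n m) \<longlonglongrightarrow> mu m"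
  shows "AE \<alpha> in D. (\<lambda>n. \<Sum>k\<in>UNIV. c \<alpha> k * tdma_policy (L n) (U n) k \<alpha>)
           \<longlonglongrightarrow> (\<Sum>k\<in>UNIV. c \<alpha> k * tdma_policy lam mu k \<alpha>)"
  using AE_generic_state_opt
  by eventually_elim (intro tendsto_intros tdma_policy_tendsto[OF _ L U])

text \<open>Raising the multipliers by \<open>t\<close> in a nonnegative direction \<open>(l', u')\<close> cannot lower the
  expected pointwise dual below the optimum, which bounds the priced power of the perturbed
  TDMA policy by \<open>budget l' u'\<close>.\<close>
lemma nn_integral_usage_perturbed_up:
  assumes l': "\<forall>k. 0 \<le> l' k" and u': "\<forall>m. 0 \<le> u' m" and t: "0 < t"
  shows "(\<integral>\<^sup>+\<alpha>. ennreal (\<Sum>k\<in>UNIV. price l' u' \<alpha> k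
           * tdma_policy (\<lambda>k. lam k + t * l' k) (\<lambda>m. mu m + t * u' m) k \<alpha>) \<partial>D)
         \<le> ennreal (budget l' u')"
proof -
  define L where "L = (\<lambda>k. lam k + t * l' k)"
  define U where "U = (\<lambda>m. mu m + t * u' m)"
  define Z where "Z \<alpha> = (\<Sum>k\<in>UNIV. price l' u' \<alpha> k * tdma_policy L U k \<alpha>)" for \<alpha>
  have [measurable]: "Z \<in> borel_measurable D" unfolding Z_def by measurable
  have price_dir: "AE \<alpha> in D. \<forall>k. 0 \<le> price l' u' \<alpha> k"
    using gains_nonneg
    by eventually_elim (use l' u' in \<open>auto simp: price_def intro!: add_nonneg_nonneg sum_nonneg\<close>)
  then have Z0: "AE \<alpha> in D. 0 \<le> Z \<alpha>"
    by eventually_elim (auto simp: Z_def tdma_policy_nonneg intro!: sum_nonneg)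
  have g: "AE \<alpha> in D. generic_state L U \<alpha>"
    using price_dir
    by (intro AE_generic_state_price_ge[OF AE_price_pos]) (auto elim!: eventually_mono simp: L_def U_def price_add_scaled t less_imp_le)
  have le: "AE \<alpha> in D. pw_dual L U \<alpha> \<le> pw_dual lam mu \<alpha> + - t * Z \<alpha>"
    using AE_generic_state_opt
  proof eventually_elim
    case (elim \<alpha>)
    have "pw_dual L U \<alpha> = pw_lagrangian lam mu \<alpha> (\<lambda>k. tdma_policy L U k \<alpha>) - t * Z \<alpha>"
      unfolding pw_dual_def L_def U_def Z_def pw_lagrangian_add_scaled ..
    then show ?case using pw_lagrangian_le_pw_dual[OF elim tdma_policy_nonneg] by simp
  qed
  have "integrable D (\<lambda>\<alpha>. pw_dual lam mu \<alpha> / t)"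
    using pw_dual_opt_integrable(1) by simp
  then have iZ: "integrable D Z"
  proof (rule Bochner_Integration.integrable_bound)
    show "AE \<alpha> in D. norm (Z \<alpha>) \<le> norm (pw_dual lam mu \<alpha> / t)"
      using le g Z0
    proof eventually_elim
      case (elim \<alpha>)
      then have "t * Z \<alpha> \<le> pw_dual lam mu \<alpha>" using pw_dual_nonneg[of L U \<alpha>] by simp
      then have "Z \<alpha> \<le> \<bar>pw_dual lam mu \<alpha>\<bar> / t" using t by (simp add: field_simps)
      then show ?case using elim(3) t by simp
    qed
  qed measurable
  have "budget lam mu \<le> (\<integral>\<alpha>. - t * Z \<alpha> \<partial>D) + budget L U"
    using lam_nonneg mu_nonneg l' u' t g iZ le
    by (intro budget_le_perturbed) (auto simp: L_def U_def intro: add_nonneg_nonneg)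
  then have "(\<integral>\<alpha>. Z \<alpha> \<partial>D) \<le> budget l' u'"
    using t by (simp add: L_def U_def budget_add_scaled)
  then show ?thesis
    unfolding Z_def[symmetric] L_def[symmetric] U_def[symmetric]
    using nn_integral_eq_integral[OF iZ Z0] by (simp add: ennreal_leI)
qed

lemma nn_integral_tdma_usage_le:
  assumes l': "\<forall>k. 0 \<le> l' k" and u': "\<forall>m. 0 \<le> u' m"
  shows "(\<integral>\<^sup>+\<alpha>. ennreal (\<Sum>k\<in>UNIV. price l' u' \<alpha> k * tdma_policy lam mu k \<alpha>) \<partial>D)
           \<le> ennreal (budget l' u')"
proof -
  define t where "t n = 1 / real (Suc n)" for n
  define Z where "Z n \<alpha> = (\<Sum>k\<in>UNIV. price l' u' \<alpha> k
      * tdma_policy (\<lambda>k. lam k + t n * l' k) (\<lambda>m. mu m + t n * u' m) k \<alpha>)" for n \<alpha>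
  have t_lim: "t \<longlonglongrightarrow> 0"
    unfolding t_def using LIMSEQ_inverse_real_of_nat by (simp add: inverse_eq_divide)
  have "AE \<alpha> in D. (\<lambda>n. Z n \<alpha>) \<longlonglongrightarrow> (\<Sum>k\<in>UNIV. price l' u' \<alpha> k * tdma_policy lam mu k \<alpha>)"
    unfolding Z_def using t_lim by (intro AE_usage_tendsto) (auto intro!: tendsto_eq_intros)
  then have "(\<integral>\<^sup>+\<alpha>. ennreal (\<Sum>k\<in>UNIV. price l' u' \<alpha> k * tdma_policy lam mu k \<alpha>) \<partial>D)
      = (\<integral>\<^sup>+\<alpha>. liminf (\<lambda>n. ennreal (Z n \<alpha>)) \<partial>D)"
    by (intro nn_integral_cong_AE) (auto elim!: eventually_mono intro: lim_imp_Liminf[symmetric])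
  also have "\<dots> \<le> liminf (\<lambda>n. \<integral>\<^sup>+\<alpha>. ennreal (Z n \<alpha>) \<partial>D)"
    by (rule nn_integral_liminf) (simp add: Z_def)
  also have "\<dots> \<le> ennreal (budget l' u')"
  proof (rule Liminf_le[OF trivial_limit_sequentially], intro always_eventually allI)
    fix n
    show "(\<integral>\<^sup>+\<alpha>. ennreal (Z n \<alpha>) \<partial>D) \<le> ennreal (budget l' u')"
      unfolding Z_def by (rule nn_integral_usage_perturbed_up[OF l' u']) (simp add: t_def)
  qed
  finally show ?thesis .
qed

lemma usage_perturbed_down_bound:
  assumes t: "0 < t" "t \<le> 1 / 2"
  shows "AE \<alpha> in D. norm (\<Sum>k\<in>UNIV. price lam mu \<alpha> k
           * tdma_policy (\<lambda>k. lam k + - t * lam k) (\<lambda>m. mu m + - t * mu m) k \<alpha>) \<le> 2 * real CARD('k)"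
  using AE_price_pos AE_gains_pos
proof eventually_elim
  case (elim \<alpha>)
  define L where "L = (\<lambda>k. lam k + - t * lam k)"
  define U where "U = (\<lambda>m. mu m + - t * mu m)"
  have "0 \<le> price lam mu \<alpha> k * tdma_policy L U k \<alpha> \<and> price lam mu \<alpha> k * tdma_policy L U k \<alpha> \<le> 2" for k
  proof -
    have price_LU: "price L U \<alpha> k = (1 - t) * price lam mu \<alpha> k"
      unfolding L_def U_def price_add_scaled by (simp add: algebra_simps)
    have c: "0 < price lam mu \<alpha> k" "0 < price L U \<alpha> k"
      using elim t by (auto simp: price_LU)
    have "tdma_policy L U k \<alpha> \<le> 1 / price L U \<alpha> k"
      using elim c by (intro tdma_policy_le_inverse_price) auto
    then have "price lam mu \<alpha> k * tdma_policy L U k \<alpha> \<le> 1 / (1 - t)"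
      using c t by (simp add: price_LU field_simps)
    also have "\<dots> \<le> 2" using t by (simp add: field_simps)
    finally show ?thesis using c by (simp add: tdma_policy_nonneg)
  qed
  then have "0 \<le> (\<Sum>k\<in>UNIV. price lam mu \<alpha> k * tdma_policy L U k \<alpha>)"
      "(\<Sum>k\<in>UNIV. price lam mu \<alpha> k * tdma_policy L U k \<alpha>) \<le> (\<Sum>k\<in>(UNIV :: 'k set). 2)"
    by (intro sum_nonneg sum_mono; blast)+
  then show ?case by (simp add: L_def U_def)
qed

text \<open>Scaling the multipliers down by \<open>1 - t\<close> gives the reverse inequality.\<close>
lemma budget_le_usage_perturbed_down:
  assumes t: "0 < t" "t \<le> 1 / 2"
  shows "budget lam mu \<le> (\<integral>\<alpha>. (\<Sum>k\<in>UNIV. price lam mu \<alpha> k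
           * tdma_policy (\<lambda>k. lam k + - t * lam k) (\<lambda>m. mu m + - t * mu m) k \<alpha>) \<partial>D)"
proof -
  define L where "L = (\<lambda>k. lam k + - t * lam k)"
  define U where "U = (\<lambda>m. mu m + - t * mu m)"
  define Z where "Z \<alpha> = (\<Sum>k\<in>UNIV. price lam mu \<alpha> k * tdma_policy L U k \<alpha>)" for \<alpha>
  have iZ: "integrable D Z"
    using usage_perturbed_down_bound[OF t] unfolding Z_def L_def U_def
    by (intro integrable_const_bound) auto
  have "\<forall>k. 0 \<le> L k" "\<forall>m. 0 \<le> U m"
    using lam_nonneg mu_nonneg t by (auto simp: L_def U_def intro!: mult_left_le_one_le)
  moreover have "AE \<alpha> in D. generic_state L U \<alpha>"
  proof (rule AE_generic_state)
    have "price L U \<alpha> k = (1 - t) * price lam mu \<alpha> k" for \<alpha> k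
      unfolding L_def U_def price_add_scaled by (simp add: algebra_simps)
    then show "AE \<alpha> in D. \<forall>k. 0 < price L U \<alpha> k"
      using AE_price_pos t by (auto elim!: eventually_mono)
  qed
  moreover have "AE \<alpha> in D. pw_dual L U \<alpha> \<le> pw_dual lam mu \<alpha> + t * Z \<alpha>"
    using AE_generic_state_opt
  proof eventually_elim
    case (elim \<alpha>)
    have "pw_dual L U \<alpha> = pw_lagrangian lam mu \<alpha> (\<lambda>k. tdma_policy L U k \<alpha>) + t * Z \<alpha>"
      unfolding pw_dual_def L_def U_def Z_def pw_lagrangian_add_scaled by simp
    then show ?case using pw_lagrangian_le_pw_dual[OF elim tdma_policy_nonneg] by simp
  qed
  ultimately have "budget lam mu \<le> (\<integral>\<alpha>. t * Z \<alpha> \<partial>D) + budget L U"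
    using iZ by (intro budget_le_perturbed) auto
  then have "t * budget lam mu \<le> t * (\<integral>\<alpha>. Z \<alpha> \<partial>D)"
    unfolding L_def U_def budget_add_scaled by (simp add: algebra_simps)
  then show ?thesis using t by (simp add: Z_def L_def U_def)
qed

lemma budget_le_tdma_usage:
  "budget lam mu \<le> (\<integral>\<alpha>. (\<Sum>k\<in>UNIV. price lam mu \<alpha> k * tdma_policy lam mu k \<alpha>) \<partial>D)"
proof -
  define t where "t n = 1 / real (n + 2)" for n
  define Z where "Z n \<alpha> = (\<Sum>k\<in>UNIV. price lam mu \<alpha> k
      * tdma_policy (\<lambda>k. lam k + - t n * lam k) (\<lambda>m. mu m + - t n * mu m) k \<alpha>)" for n \<alpha>
  have t: "0 < t n" "t n \<le> 1 / 2" for n by (auto simp: t_def field_simps)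
  have t_lim: "t \<longlonglongrightarrow> 0"
    unfolding t_def using LIMSEQ_ignore_initial_segment[OF lim_const_over_n[of 1], of 2] by simp
  have "(\<lambda>n. \<integral>\<alpha>. Z n \<alpha> \<partial>D)
      \<longlonglongrightarrow> (\<integral>\<alpha>. (\<Sum>k\<in>UNIV. price lam mu \<alpha> k * tdma_policy lam mu k \<alpha>) \<partial>D)"
  proof (rule integral_dominated_convergence[where w = "\<lambda>_. 2 * real CARD('k)"])
    show "AE \<alpha> in D. (\<lambda>n. Z n \<alpha>) \<longlonglongrightarrow> (\<Sum>k\<in>UNIV. price lam mu \<alpha> k * tdma_policy lam mu k \<alpha>)"
      unfolding Z_def using t_lim by (intro AE_usage_tendsto) (auto intro!: tendsto_eq_intros)
    show "AE \<alpha> in D. norm (Z n \<alpha>) \<le> 2 * real CARD('k)" for n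
      unfolding Z_def using t by (rule usage_perturbed_down_bound)
  qed (auto simp: Z_def)
  moreover have "budget lam mu \<le> (\<integral>\<alpha>. Z n \<alpha> \<partial>D)" for n
    unfolding Z_def using t by (rule budget_le_usage_perturbed_down)
  ultimately show ?thesis by (intro LIMSEQ_le_const) auto
qed

lemma nn_integral_tdma_usage_eq:
  "(\<integral>\<^sup>+\<alpha>. ennreal (\<Sum>k\<in>UNIV. price lam mu \<alpha> k * tdma_policy lam mu k \<alpha>) \<partial>D) = ennreal (budget lam mu)"
proof -
  let ?Z = "\<lambda>\<alpha>. \<Sum>k\<in>UNIV. price lam mu \<alpha> k * tdma_policy lam mu k \<alpha>"
  have le: "(\<integral>\<^sup>+\<alpha>. ennreal (?Z \<alpha>) \<partial>D) \<le> ennreal (budget lam mu)"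
    using lam_nonneg mu_nonneg by (intro nn_integral_tdma_usage_le) auto
  have nn: "AE \<alpha> in D. 0 \<le> ?Z \<alpha>"
    using AE_price_pos by eventually_elim (auto intro!: sum_nonneg simp: tdma_policy_nonneg less_imp_le)
  have "integrable D ?Z"
    using le nn by (intro integrableI_nonneg) (auto simp: top_unique intro: le_less_trans)
  then have "(\<integral>\<^sup>+\<alpha>. ennreal (?Z \<alpha>) \<partial>D) = ennreal (\<integral>\<alpha>. ?Z \<alpha> \<partial>D)"
    using nn by (rule nn_integral_eq_integral)
  then show ?thesis using le budget_le_tdma_usage by (auto intro: antisym ennreal_leI)
qed

lemma tdma_policy_feasible: "feasible D PLT GLT (tdma_policy lam mu)"
proof -
  have "(\<integral>\<^sup>+\<alpha>. ennreal (tdma_policy lam mu k \<alpha>) \<partial>D) \<le> ennreal (PLT k)" for k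
    using nn_integral_tdma_usage_le[of "\<lambda>j. of_bool (j = k)" "\<lambda>_. 0"]
    by (simp add: price_def budget_def)
  moreover have "(\<integral>\<^sup>+\<alpha>. ennreal (\<Sum>k\<in>UNIV. gg \<alpha> k m * tdma_policy lam mu k \<alpha>) \<partial>D) \<le> ennreal (GLT m)" for m
    using nn_integral_tdma_usage_le[of "\<lambda>_. 0" "\<lambda>i. of_bool (i = m)"]
    by (simp add: price_def budget_def)
  ultimately show ?thesis by (simp add: feasible_def policy_def tdma_policy_nonneg)
qed

lemma usage_nonneg:
  assumes "generic_state l u \<alpha>" and "\<And>k. 0 \<le> x k"
  shows "0 \<le> (\<Sum>k\<in>UNIV. price l u \<alpha> k * x k)"
  using assms unfolding generic_state_def by (intro sum_nonneg mult_nonneg_nonneg) (auto simp: less_imp_le)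

lemma ln_le_pw_dual_add_usage:
  assumes g: "generic_state lam mu \<alpha>" and x: "\<And>k. 0 \<le> x k"
  shows "ennreal (ln (1 + (\<Sum>k\<in>UNIV. hh \<alpha> k * x k)))
     \<le> ennreal (pw_dual lam mu \<alpha>) + ennreal (\<Sum>k\<in>UNIV. price lam mu \<alpha> k * x k)"
proof -
  have "ln (1 + (\<Sum>k\<in>UNIV. hh \<alpha> k * x k)) = pw_lagrangian lam mu \<alpha> x + (\<Sum>k\<in>UNIV. price lam mu \<alpha> k * x k)"
    by (simp add: pw_lagrangian_def)
  also have "\<dots> \<le> pw_dual lam mu \<alpha> + (\<Sum>k\<in>UNIV. price lam mu \<alpha> k * x k)"
    using pw_lagrangian_le_pw_dual[OF g x] by simp
  finally have "ennreal (ln (1 + (\<Sum>k\<in>UNIV. hh \<alpha> k * x k)))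
      \<le> ennreal (pw_dual lam mu \<alpha> + (\<Sum>k\<in>UNIV. price lam mu \<alpha> k * x k))"
    by (rule ennreal_leI)
  also have "\<dots> = ennreal (pw_dual lam mu \<alpha>) + ennreal (\<Sum>k\<in>UNIV. price lam mu \<alpha> k * x k)"
    using pw_dual_nonneg[OF g] usage_nonneg[OF g x] by (rule ennreal_plus)
  finally show ?thesis .
qed

lemma ln_tdma_eq_pw_dual_add_usage:
  assumes g: "generic_state lam mu \<alpha>"
  shows "ennreal (ln (1 + (\<Sum>k\<in>UNIV. hh \<alpha> k * tdma_policy lam mu k \<alpha>)))
     = ennreal (pw_dual lam mu \<alpha>) + ennreal (\<Sum>k\<in>UNIV. price lam mu \<alpha> k * tdma_policy lam mu k \<alpha>)"
proof -
  have "ln (1 + (\<Sum>k\<in>UNIV. hh \<alpha> k * tdma_policy lam mu k \<alpha>))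
      = pw_dual lam mu \<alpha> + (\<Sum>k\<in>UNIV. price lam mu \<alpha> k * tdma_policy lam mu k \<alpha>)"
    by (simp add: pw_dual_def pw_lagrangian_def)
  then show ?thesis
    using ennreal_plus[OF pw_dual_nonneg[OF g] usage_nonneg[OF g tdma_policy_nonneg]] by simp
qed

lemma tdma_policy_optimal: "optimal_policy D PLT GLT (tdma_policy lam mu)"
  unfolding optimal_policy_def
proof (intro conjI allI impI tdma_policy_feasible)
  fix q assume q: "feasible D PLT GLT q"
  then have [measurable]: "q k \<in> borel_measurable D" and q0: "0 \<le> q k \<alpha>" for k \<alpha>
    unfolding feasible_def policy_def by blast+
  have "rate D q \<le> (\<integral>\<^sup>+\<alpha>. ennreal (pw_dual lam mu \<alpha>) + ennreal (\<Sum>k\<in>UNIV. price lam mu \<alpha> k * q k \<alpha>) \<partial>D)"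
    unfolding rate_def using AE_generic_state_opt
    by (intro nn_integral_mono_AE) (auto elim!: eventually_mono intro: ln_le_pw_dual_add_usage q0)
  also have "\<dots> \<le> (\<integral>\<^sup>+\<alpha>. ennreal (pw_dual lam mu \<alpha>) \<partial>D) + ennreal (budget lam mu)"
    using nn_integral_usage_le_budget[OF lam_nonneg mu_nonneg q] by (simp add: nn_integral_add add_left_mono)
  also have "\<dots> = rate D (tdma_policy lam mu)"
    unfolding rate_def nn_integral_tdma_usage_eq[symmetric] using AE_generic_state_opt
    by (subst nn_integral_add[symmetric]) (auto intro!: nn_integral_cong_AE elim!: eventually_mono
        simp: ln_tdma_eq_pw_dual_add_usage)
  finally show "rate D q \<le> rate D (tdma_policy lam mu)" .
qed

end

theorem theorem3p1:
  fixes D :: "('k::finite, 'm::finite) chstate measure"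
    and PLT :: "'k \<Rightarrow> real" and GLT :: "'m \<Rightarrow> real"
    and lam :: "'k \<Rightarrow> real" and mu :: "'m \<Rightarrow> real"
  assumes prob: "prob_space D"
    and sets_D: "sets D = sets borel"
    and nonneg: "AE \<alpha> in D. (\<forall>k. 0 \<le> hh \<alpha> k) \<and> (\<forall>k m. 0 \<le> gg \<alpha> k m)"
    and cdf_cont: "continuous_on UNIV (joint_cdf D)"
    and cdf_diff: "\<forall>x. joint_cdf D differentiable (at x)"
    and indep: "prob_space.indep_vars D (\<lambda>_. borel) gain_coord UNIV"
    and PLT_pos: "\<forall>k. 0 < PLT k"
    and GLT_pos: "\<forall>m. 0 < GLT m"
    and dual_opt: "dual_optimal D PLT GLT lam mu"
  shows "\<exists>p. optimal_policy D PLT GLT p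
           \<and> (AE \<alpha> in D.
                (\<forall>i j. 0 < p i \<alpha> \<and> 0 < p j \<alpha> \<longrightarrow> i = j)
              \<and> (\<forall>i. 0 < p i \<alpha> \<longrightarrow>
                    (\<forall>j. j \<noteq> i \<longrightarrow>
                       hh \<alpha> j / (lam j + (\<Sum>m\<in>UNIV. mu m * gg \<alpha> j m))
                         \<le> hh \<alpha> i / (lam i + (\<Sum>m\<in>UNIV. mu m * gg \<alpha> i m)))
                  \<and> p i \<alpha> = max 0 (1 / (lam i + (\<Sum>m\<in>UNIV. mu m * gg \<alpha> i m)) - 1 / hh \<alpha> i)))"
proof -
  have "cognitive_mac D PLT GLT"
    using prob sets_D nonneg cdf_cont indep PLT_pos GLT_pos
    unfolding cognitive_mac_def by (blast intro: less_imp_le)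
  then interpret cognitive_mac_dual D PLT GLT lam mu
    using dual_opt by (intro cognitive_mac_dual.intro cognitive_mac_dual_axioms.intro)
  have "AE \<alpha> in D.
      (\<forall>i j. 0 < tdma_policy lam mu i \<alpha> \<and> 0 < tdma_policy lam mu j \<alpha> \<longrightarrow> i = j)
    \<and> (\<forall>i. 0 < tdma_policy lam mu i \<alpha> \<longrightarrow>
          (\<forall>j. j \<noteq> i \<longrightarrow>
             hh \<alpha> j / (lam j + (\<Sum>m\<in>UNIV. mu m * gg \<alpha> j m))
               \<le> hh \<alpha> i / (lam i + (\<Sum>m\<in>UNIV. mu m * gg \<alpha> i m)))
        \<and> tdma_policy lam mu i \<alpha> = max 0 (1 / (lam i + (\<Sum>m\<in>UNIV. mu m * gg \<alpha> i m)) - 1 / hh \<alpha> i))"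
    using tdma_policy_single_user[of lam mu] unfolding price_def by (rule AE_I2)
  with tdma_policy_optimal show ?thesis by blast
qed

end
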